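(* Let $u$ be a term of $\mathscr{L}_{\max}$ with no free variables and let $c$ be a constant symbol. For every $f:\mathbb{N}\to\mathbb{N}$, $\mathscr{M}_f\models u=c$ if and only if there is some $k\in\mathbb{N}$ such that for every $g:\mathbb{N}\to\mathbb{N}$ extending $(f(0),\ldots,f(k))$ (i.e. $g(i)=f(i)$ for all $i\le k$), $\mathscr{M}_g\models u=c$, and checking whether $\mathscr{M}_g\models u=c$ via the inductive definition of the semantics of $\mathscr{M}_g$ never requires querying $g(i)$ for any $i>k$.
   Context: $\mathbb{N}^{<\mathbb{N}}$ denotes the set of finite sequences of naturals. The language $\mathscr{L}_{\max}$ is a first-order language extended with ellipses. Its symbols: a constant symbol $\mathbf{n}$ (also written $\bar n$) for each $n\in\mathbb{N}$; an $n$-ary function symbol $\tilde w$ for each $w:\mathbb{N}^n\to\mathbb{N}$ ($n>0$); an $n$-ary predicate symbol $\tilde p$ for each $p\subseteq\mathbb{N}^n$ ($n>0$); an "$\mathbb{N}^{<\mathbb{N}}$-ary" function symbol $\tilde G$ for each $G:\mathbb{N}^{<\mathbb{N}}\to\mathbb{N}$; one extra unary function symbol $\mathbf{f}$; and, for each variable $x$, a logical symbol $\cdots_x$. Terms and their free variables: a variable $x$ (free variables $\{x\}$); a constant (no free variables); $h(t_1,\ldots,t_n)$ for $h$ an $n$-ary or $\mathbb{N}^{<\mathbb{N}}$-ary function symbol and terms $t_i$ (free variables the union); and, for an $\mathbb{N}^{<\mathbb{N}}$-ary $G$, terms $u,v$ and a variable $x$, the term $G(u(\mathbf{0}),\cdots_x,u(v))$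 with free variables $(FV(u)\setminus\{x\})\cup FV(v)$. Formulas are built from these terms as usual. Substitution $t(y|t')$ is defined as usual with two new cases: for $y\neq x$, $G(u(\mathbf{0}),\cdots_x,u(v))(y|t)=G(u(y|t)(\mathbf{0}),\cdots_x,u(y|t)(v(y|t)))$, and $G(u(\mathbf{0}),\cdots_x,u(v))(x|t)=G(u(\mathbf{0}),\cdots_x,u(v(x|t)))$. For $f:\mathbb{N}\to\mathbb{N}$, $\mathscr{M}_f$ is the structure with universe $\mathbb{N}$ interpreting $\mathbf{n}$ as $n$, $\tilde w$ as $w$, $\tilde p$ as $p$, $\tilde G$ as $G$, and $\mathbf{f}$ as $f$. Under an assignment $s$ of variables to naturals, terms are evaluated by the usual induction plus the clause $G(u(\mathbf{0}),\cdots_x,u(v))^{s}=G\big(u(x|\mathbf{0})^{s},\ldots,u(x|\overline{v^{s}})^{s}\big)$; satisfaction of formulas is then defined as usual. "Querying $g(i)$" means applying the interpretation $g$ of $\mathbf{f}$ to the argument $i$ during this inductive evaluation. *)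

theory Defs
  imports Main
begin

text \<open>Fn n w ts : the n-ary function symbol for w : N^n -> N (w given on lists; only its values on
              lists of length n matter), applied to ts.
  GFn G ts  : the N^{<N}-ary symbol for G applied to ts.
  FSym t    : the extra unary function symbol f applied to t.
  Ell G u x v : the term G(u(0), ..._x, u(v)).\<close>

datatype trm =
    Var nat
  | Const nat
  | Fn nat "nat list \<Rightarrow> nat" "trm list"
  | GFn "nat list \<Rightarrow> nat" "trm list"
  | FSym trm
  | Ell "nat list \<Rightarrow> nat" trm nat trm

fun wf_trm :: "trm \<Rightarrow> bool" where
  "wf_trm (Var x) = True"
| "wf_trm (Const n) = True"
| "wf_trm (Fn n w ts) = (0 < n \<and> length ts = n \<and> (\<forall>t\<in>set ts. wf_trm t))"
| "wf_trm (GFn G ts) = (\<forall>t\<in>set ts. wf_trm t)"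
| "wf_trm (FSym t) = wf_trm t"
| "wf_trm (Ell G u x v) = (wf_trm u \<and> wf_trm v)"

fun fv :: "trm \<Rightarrow> nat set" where
  "fv (Var x) = {x}"
| "fv (Const n) = {}"
| "fv (Fn n w ts) = (\<Union>t\<in>set ts. fv t)"
| "fv (GFn G ts) = (\<Union>t\<in>set ts. fv t)"
| "fv (FSym t) = fv t"
| "fv (Ell G u x v) = (fv u - {x}) \<union> fv v"

text \<open>Value of a term in M_g under assignment s.  The value of u(x|i) under s is taken as the
  value of u under s(x:=i) (substitution of a numeral).\<close>
fun eval :: "(nat \<Rightarrow> nat) \<Rightarrow> (nat \<Rightarrow> nat) \<Rightarrow> trm \<Rightarrow> nat" where
  "eval g s (Var x) = s x"
| "eval g s (Const n) = n"
| "eval g s (Fn n w ts) = w (map (eval g s) ts)"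
| "eval g s (GFn G ts) = G (map (eval g s) ts)"
| "eval g s (FSym t) = g (eval g s t)"
| "eval g s (Ell G u x v) = G (map (\<lambda>i. eval g (s(x := i)) u) [0..<Suc (eval g s v)])"

fun queries :: "(nat \<Rightarrow> nat) \<Rightarrow> (nat \<Rightarrow> nat) \<Rightarrow> trm \<Rightarrow> nat set" where
  "queries g s (Var x) = {}"
| "queries g s (Const n) = {}"
| "queries g s (Fn n w ts) = (\<Union>t\<in>set ts. queries g s t)"
| "queries g s (GFn G ts) = (\<Union>t\<in>set ts. queries g s t)"
| "queries g s (FSym t) = queries g s t \<union> {eval g s t}"
| "queries g s (Ell G u x v) =
     queries g s v \<union> (\<Union>i\<in>{0..eval g s v}. queries g (s(x := i)) u)"

definition sat_eq :: "(nat \<Rightarrow> nat) \<Rightarrow> (nat \<Rightarrow> nat) \<Rightarrow> trm \<Rightarrow> trm \<Rightarrow> bool" where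
  "sat_eq g s t1 t2 \<longleftrightarrow> eval g s t1 = eval g s t2"

definition queries_eq :: "(nat \<Rightarrow> nat) \<Rightarrow> (nat \<Rightarrow> nat) \<Rightarrow> trm \<Rightarrow> trm \<Rightarrow> nat set" where
  "queries_eq g s t1 t2 = queries g s t1 \<union> queries g s t2"

end

theory Submission
  imports Defs
begin

text \<open>Evaluating a term only consults the oracle at the arguments it queries, and these are finitely
  many. Hence, if \<open>u = c\<close> holds in \<open>M_f\<close>, any \<open>k\<close> bounding the queries of the evaluation in \<open>M_f\<close>
  works: an oracle \<open>g\<close> agreeing with \<open>f\<close> up to \<open>k\<close> answers every query exactly as \<open>f\<close> does, so the
  evaluation in \<open>M_g\<close> runs identically. For a closed term nothing depends on the assignment, so one
  bound serves all assignments. The converse is the case \<open>g = f\<close>.\<close>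

lemma eval_queries_cong_oracle:
  assumes "\<forall>i\<in>queries g s t. g i = g' i"
  shows "eval g' s t = eval g s t \<and> queries g' s t = queries g s t"
  using assms
proof (induction t arbitrary: s)
  case (Fn n w ts)
  have "eval g' s t = eval g s t \<and> queries g' s t = queries g s t" if "t \<in> set ts" for t
    using that Fn.prems by (intro Fn.IH) auto
  then show ?case by (simp del: map_eq_conv cong: map_cong SUP_cong)
next
  case (GFn G ts)
  have "eval g' s t = eval g s t \<and> queries g' s t = queries g s t" if "t \<in> set ts" for t
    using that GFn.prems by (intro GFn.IH) auto
  then show ?case by (simp del: map_eq_conv cong: map_cong SUP_cong)
next
  case (FSym t)
  have "eval g' s t = eval g s t \<and> queries g' s t = queries g s t"
    using FSym.prems by (intro FSym.IH) simp
  moreover have "g' (eval g s t) = g (eval g s t)"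
    using FSym.prems by simp
  ultimately show ?case by simp
next
  case (Ell G u x v)
  have v: "eval g' s v = eval g s v \<and> queries g' s v = queries g s v"
    using Ell.prems by (intro Ell.IH(2)) simp
  have u: "eval g' (s(x := i)) u = eval g (s(x := i)) u
      \<and> queries g' (s(x := i)) u = queries g (s(x := i)) u" if "i \<le> eval g s v" for i
    using that Ell.prems by (intro Ell.IH(1)) (auto simp del: fun_upd_apply)
  have "map (\<lambda>i. eval g' (s(x := i)) u) [0..<Suc (eval g s v)] =
      map (\<lambda>i. eval g (s(x := i)) u) [0..<Suc (eval g s v)]"
    by (rule map_cong) (auto simp: u)
  moreover have "(\<Union>i\<in>{0..eval g s v}. queries g' (s(x := i)) u) =
      (\<Union>i\<in>{0..eval g s v}. queries g (s(x := i)) u)"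
    by (rule SUP_cong) (auto simp: u)
  ultimately show ?case
    by (simp add: v del: map_eq_conv upt_Suc)
qed simp_all

lemma eval_queries_cong_assignment:
  assumes "\<forall>y\<in>fv t. s y = s' y"
  shows "eval g s' t = eval g s t \<and> queries g s' t = queries g s t"
  using assms
proof (induction t arbitrary: s s')
  case (Fn n w ts)
  have "eval g s' t = eval g s t \<and> queries g s' t = queries g s t" if "t \<in> set ts" for t
    using that Fn.prems by (intro Fn.IH) auto
  then show ?case by (simp del: map_eq_conv cong: map_cong SUP_cong)
next
  case (GFn G ts)
  have "eval g s' t = eval g s t \<and> queries g s' t = queries g s t" if "t \<in> set ts" for t
    using that GFn.prems by (intro GFn.IH) auto
  then show ?case by (simp del: map_eq_conv cong: map_cong SUP_cong)
next
  case (FSym t)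
  have "eval g s' t = eval g s t \<and> queries g s' t = queries g s t"
    using FSym.prems by (intro FSym.IH) simp
  then show ?case by simp
next
  case (Ell G u x v)
  have v: "eval g s' v = eval g s v \<and> queries g s' v = queries g s v"
    using Ell.prems by (intro Ell.IH(2)) simp
  have u: "eval g (s'(x := i)) u = eval g (s(x := i)) u
      \<and> queries g (s'(x := i)) u = queries g (s(x := i)) u" for i
    using Ell.prems by (intro Ell.IH(1)) simp
  show ?case
    by (simp only: eval.simps queries.simps v u)
qed simp_all

lemma finite_queries: "finite (queries g s t)"
  by (induction t arbitrary: s) simp_all

theorem lemma3p5:
  fixes u :: trm and n :: nat and f :: "nat \<Rightarrow> nat"
  assumes "wf_trm u" and "fv u = {}"
  shows "(\<forall>s. sat_eq f s u (Const n)) \<longleftrightarrow>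
         (\<exists>k. \<forall>g. (\<forall>i\<le>k. g i = f i) \<longrightarrow>
              (\<forall>s. sat_eq g s u (Const n) \<and> queries_eq g s u (Const n) \<subseteq> {..k}))"
proof
  assume sat: "\<forall>s. sat_eq f s u (Const n)"
  define s0 :: "nat \<Rightarrow> nat" where "s0 = (\<lambda>_. 0)"
  have queries_closed: "queries f s u = queries f s0 u" for s
    using eval_queries_cong_assignment[of u s0 s f] \<open>fv u = {}\<close> by simp
  obtain k where k: "queries f s0 u \<subseteq> {..k}"
    using finite_queries finite_nat_set_iff_bounded_le by (metis atMost_iff subsetI)
  have "sat_eq g s u (Const n) \<and> queries_eq g s u (Const n) \<subseteq> {..k}"
    if g: "\<forall>i\<le>k. g i = f i" for g s
  proof -
    have "queries f s u \<subseteq> {..k}"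
      using queries_closed[of s] k by simp
    then have "\<forall>i\<in>queries f s u. f i = g i"
      using g by auto
    then have "eval g s u = eval f s u \<and> queries g s u = queries f s u"
      by (rule eval_queries_cong_oracle)
    then show ?thesis
      using sat \<open>queries f s u \<subseteq> {..k}\<close> by (auto simp: sat_eq_def queries_eq_def)
  qed
  then show "\<exists>k. \<forall>g. (\<forall>i\<le>k. g i = f i) \<longrightarrow>
      (\<forall>s. sat_eq g s u (Const n) \<and> queries_eq g s u (Const n) \<subseteq> {..k})"
    by blast
qed blast

end
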